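(* Let $\Omega\subset\mathbb{R}^d$ be a domain and let $u\in\mathcal{S}^F(\Omega)$. Then $$L_u(u)\ge(2-\gamma)u^{\gamma-1}\quad\text{in }\{u>0\}\cap\Omega,\qquad\text{and}\qquad \Delta u\le u^{\gamma-1}\quad\text{in }\Omega.$$
   Context: Fix $d\ge1$, $\Lambda\ge1$, $\gamma\in(1,2)$. $\mathcal{S}_d$ is the space of real symmetric $d\times d$ matrices. Standing assumptions on $F:\mathcal{S}_d\to\mathbb{R}$: (i) uniform ellipticity: $\frac1\Lambda\|P\|\le F(M+P)-F(M)\le\Lambda\|P\|$ for all $M,P\in\mathcal{S}_d$, $P\ge0$; (ii) $F$ is convex, $F(0)=0$, and the trace map $M\mapsto \mathrm{trace}(M)$ is a sub-differential of $F$ at $0$; (iii) either $F$ is (Gâteaux) differentiable at $0$, or $F(\lambda M)=\lambda F(M)$ for all $\lambda>0$, $M\in\mathcal{S}_d$. A sub-differential of $F$ at $A\in\mathcal{S}_d$ is a linear map $S_A:\mathcal{S}_d\to\mathbb{R}$ with $S_A(M)\le F(A+M)-F(A)$ for all $M\in\mathcal{S}_d$. $\mathcal{S}^F(\Omega)$ is the class of continuous (viscosity, hence classical) solutions of $F(D^2u)=u^{\gamma-1}$, $u\ge0$ in $\Omega$. The linearized operator is $L_u(w)=S_{D^2u}(D^2w)-(\gamma-1)u^{\gamma-2}w$ in $\{u>0\}\cap\Omega$, where at each point $x$, $S_{D^2u}=S_{D^2u(x)}$ is a sub-differential of $F$ at $D^2u(x)$. *)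

theory Defs
  imports "HOL-Analysis.Analysis"
begin

definition sym_mat :: "real^'n^'n \<Rightarrow> bool" where
  "sym_mat M \<longleftrightarrow> transpose M = M"

definition psd :: "real^'n^'n \<Rightarrow> bool" where
  "psd P \<longleftrightarrow> (\<forall>x. 0 \<le> x \<bullet> (P *v x))"

definition mat_norm :: "real^'n^'n \<Rightarrow> real" where
  "mat_norm P = onorm (\<lambda>x. P *v x)"

definition subdiff :: "(real^'n^'n \<Rightarrow> real) \<Rightarrow> real^'n^'n \<Rightarrow> (real^'n^'n \<Rightarrow> real) \<Rightarrow> bool" where
  "subdiff F A S \<longleftrightarrow> linear S \<and> (\<forall>M. sym_mat M \<longrightarrow> S M \<le> F (A + M) - F A)"

definition standing_F :: "real \<Rightarrow> (real^'n^'n \<Rightarrow> real) \<Rightarrow> bool" where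
  "standing_F Lam F \<longleftrightarrow>
     (\<forall>M P. sym_mat M \<and> sym_mat P \<and> psd P \<longrightarrow>
        mat_norm P / Lam \<le> F (M + P) - F M \<and> F (M + P) - F M \<le> Lam * mat_norm P)
   \<and> convex_on {M. sym_mat M} F
   \<and> F 0 = 0
   \<and> subdiff F 0 trace
   \<and> ((\<exists>L. linear L \<and> (\<forall>M. sym_mat M \<longrightarrow>
            ((\<lambda>t. (F (t *\<^sub>R M) - F 0) / t) \<longlongrightarrow> L M) (at 0)))
      \<or> (\<forall>lam M. lam > 0 \<and> sym_mat M \<longrightarrow> F (lam *\<^sub>R M) = lam * F M))"

text \<open>u in S^F(Omega): a nonnegative classical (C^2) solution of F(D^2 u) = u^(gamma-1),
  with gradient Du and Hessian D2u.\<close>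
definition in_SF :: "(real^'n^'n \<Rightarrow> real) \<Rightarrow> real \<Rightarrow> (real^'n) set \<Rightarrow>
    (real^'n \<Rightarrow> real) \<Rightarrow> (real^'n \<Rightarrow> real^'n) \<Rightarrow> (real^'n \<Rightarrow> real^'n^'n) \<Rightarrow> bool" where
  "in_SF F \<gamma> \<Omega> u Du D2u \<longleftrightarrow>
     continuous_on \<Omega> u \<and> continuous_on \<Omega> D2u
   \<and> (\<forall>x\<in>\<Omega>. (u has_derivative (\<lambda>h. Du x \<bullet> h)) (at x))
   \<and> (\<forall>x\<in>\<Omega>. (Du has_derivative (\<lambda>h. D2u x *v h)) (at x))
   \<and> (\<forall>x\<in>\<Omega>. 0 \<le> u x \<and> F (D2u x) = u x powr (\<gamma> - 1))"

end

theory Submission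
  imports Defs
begin

text \<open>The Hessian of a \<open>C\<^sup>2\<close> function is symmetric (Schwarz's theorem, obtained by applying the
  mean value theorem twice to a mixed second difference), so \<open>D\<^sup>2u(x)\<close> and \<open>-D\<^sup>2u(x)\<close> are admissible
  directions in the sub-differential inequalities. Testing a sub-differential \<open>S\<close> of \<open>F\<close> at
  \<open>D\<^sup>2u(x)\<close> in the direction \<open>-D\<^sup>2u(x)\<close> gives \<open>S(D\<^sup>2u) \<ge> F(D\<^sup>2u) - F(0) = u\<^sup>\<gamma>\<^sup>-\<^sup>1\<close>, which is the
  first claim because \<open>(\<gamma>-1) u\<^sup>\<gamma>\<^sup>-\<^sup>2 u = (\<gamma>-1) u\<^sup>\<gamma>\<^sup>-\<^sup>1\<close>; testing the sub-differential \<open>trace\<close> of \<open>F\<close>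
  at \<open>0\<close> in the direction \<open>D\<^sup>2u(x)\<close> gives \<open>\<Delta>u \<le> F(D\<^sup>2u) = u\<^sup>\<gamma>\<^sup>-\<^sup>1\<close>.\<close>

lemma has_derivative_along_line:
  assumes "(f has_derivative f') (at (a + s *\<^sub>R h))"
  shows "((\<lambda>s. f (a + s *\<^sub>R h)) has_derivative (\<lambda>d. f' (d *\<^sub>R h))) (at s)"
proof -
  have "((\<lambda>s. a + s *\<^sub>R h) has_derivative (\<lambda>d. d *\<^sub>R h)) (at s)"
    by (auto intro!: derivative_eq_intros)
  from diff_chain_at[OF this assms] show ?thesis
    by (simp add: o_def)
qed

lemma second_difference_mean_value:
  fixes u :: "'a::real_inner \<Rightarrow> real" and Du :: "'a \<Rightarrow> 'a" and H :: "'a \<Rightarrow> 'a \<Rightarrow> 'a"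
  assumes "0 < t"
    and du: "\<And>s r. s \<in> {0..t} \<Longrightarrow> r \<in> {0..t} \<Longrightarrow>
      (u has_derivative (\<lambda>v. Du (x + s *\<^sub>R h + r *\<^sub>R k) \<bullet> v)) (at (x + s *\<^sub>R h + r *\<^sub>R k))"
    and d2u: "\<And>s r. s \<in> {0..t} \<Longrightarrow> r \<in> {0..t} \<Longrightarrow>
      (Du has_derivative H (x + s *\<^sub>R h + r *\<^sub>R k)) (at (x + s *\<^sub>R h + r *\<^sub>R k))"
  shows "\<exists>s\<in>{0<..<t}. \<exists>r\<in>{0<..<t}.
    u (x + t *\<^sub>R h + t *\<^sub>R k) - u (x + t *\<^sub>R h) - u (x + t *\<^sub>R k) + u x
      = t * t * (H (x + s *\<^sub>R h + r *\<^sub>R k) k \<bullet> h)"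
proof -
  have line: "x + s *\<^sub>R h + r *\<^sub>R k = (x + r *\<^sub>R k) + s *\<^sub>R h" for s r
    by (simp add: algebra_simps)
  \<comment> \<open>The redundant \<open>0 *\<^sub>R k\<close> keeps both terms in the shape rewritten by \<open>line\<close>.\<close>
  define \<phi> where "\<phi> s = u (x + s *\<^sub>R h + t *\<^sub>R k) - u (x + s *\<^sub>R h + 0 *\<^sub>R k)" for s
  have "(\<phi> has_derivative
      (\<lambda>d. Du (x + s *\<^sub>R h + t *\<^sub>R k) \<bullet> (d *\<^sub>R h) - Du (x + s *\<^sub>R h + 0 *\<^sub>R k) \<bullet> (d *\<^sub>R h))) (at s)"
    if "s \<in> {0..t}" for s
    unfolding \<phi>_def line
    using has_derivative_along_line[OF du[OF that, of t, unfolded line]]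
      has_derivative_along_line[OF du[OF that, of 0, unfolded line]] \<open>0 < t\<close>
    by (auto intro!: derivative_eq_intros)
  then have "\<exists>s\<in>{0<..<t}. \<phi> t - \<phi> 0
      = Du (x + s *\<^sub>R h + t *\<^sub>R k) \<bullet> (t *\<^sub>R h) - Du (x + s *\<^sub>R h + 0 *\<^sub>R k) \<bullet> (t *\<^sub>R h)"
    using mvt_simple[OF \<open>0 < t\<close>, of \<phi> "\<lambda>s d. Du (x + s *\<^sub>R h + t *\<^sub>R k) \<bullet> (d *\<^sub>R h)
      - Du (x + s *\<^sub>R h + 0 *\<^sub>R k) \<bullet> (d *\<^sub>R h)"] by (auto intro: has_derivative_at_withinI)
  then obtain s where s: "s \<in> {0<..<t}" and \<phi>_diff: "\<phi> t - \<phi> 0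
      = Du (x + s *\<^sub>R h + t *\<^sub>R k) \<bullet> (t *\<^sub>R h) - Du (x + s *\<^sub>R h + 0 *\<^sub>R k) \<bullet> (t *\<^sub>R h)"
    by blast
  define \<psi> where "\<psi> r = Du (x + s *\<^sub>R h + r *\<^sub>R k) \<bullet> (t *\<^sub>R h)" for r
  have "(\<psi> has_derivative (\<lambda>d. H (x + s *\<^sub>R h + r *\<^sub>R k) (d *\<^sub>R k) \<bullet> (t *\<^sub>R h))) (at r)"
    if "r \<in> {0..t}" for r
    unfolding \<psi>_def
    using has_derivative_along_line[OF d2u[of s r]] s that
    by (auto intro!: derivative_eq_intros)
  then have "\<exists>r\<in>{0<..<t}. \<psi> t - \<psi> 0 = H (x + s *\<^sub>R h + r *\<^sub>R k) (t *\<^sub>R k) \<bullet> (t *\<^sub>R h)"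
    using mvt_simple[OF \<open>0 < t\<close>, of \<psi> "\<lambda>r d. H (x + s *\<^sub>R h + r *\<^sub>R k) (d *\<^sub>R k) \<bullet> (t *\<^sub>R h)"]
    by (auto intro: has_derivative_at_withinI)
  then obtain r where r: "r \<in> {0<..<t}" and
    \<psi>_diff: "\<psi> t - \<psi> 0 = H (x + s *\<^sub>R h + r *\<^sub>R k) (t *\<^sub>R k) \<bullet> (t *\<^sub>R h)"
    by blast
  have "linear (H (x + s *\<^sub>R h + r *\<^sub>R k))"
    using d2u[of s r] s r by (auto dest: has_derivative_linear)
  then have "H (x + s *\<^sub>R h + r *\<^sub>R k) (t *\<^sub>R k) \<bullet> (t *\<^sub>R h) = t * t * (H (x + s *\<^sub>R h + r *\<^sub>R k) k \<bullet> h)"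
    by (simp add: linear_scale)
  with \<phi>_diff \<psi>_diff have "u (x + t *\<^sub>R h + t *\<^sub>R k) - u (x + t *\<^sub>R h) - u (x + t *\<^sub>R k) + u x
      = t * t * (H (x + s *\<^sub>R h + r *\<^sub>R k) k \<bullet> h)"
    unfolding \<phi>_def \<psi>_def by (simp add: algebra_simps)
  with s r show ?thesis
    by blast
qed

lemma hessian_entries_mean_value:
  fixes u :: "real^'n \<Rightarrow> real" and Du :: "real^'n \<Rightarrow> real^'n" and D2u :: "real^'n \<Rightarrow> real^'n^'n"
  assumes "0 < t" and "cball x (2 * t) \<subseteq> \<Omega>"
    and du: "\<forall>y\<in>\<Omega>. (u has_derivative (\<lambda>h. Du y \<bullet> h)) (at y)"
    and d2u: "\<forall>y\<in>\<Omega>. (Du has_derivative (\<lambda>h. D2u y *v h)) (at y)"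
  shows "\<exists>y\<^sub>1\<in>cball x (2 * t). \<exists>y\<^sub>2\<in>cball x (2 * t). D2u y\<^sub>1 $ i $ j = D2u y\<^sub>2 $ j $ i"
proof -
  have in_cball: "x + s *\<^sub>R axis a 1 + r *\<^sub>R axis b 1 \<in> cball x (2 * t)"
    if "s \<in> {0..t}" "r \<in> {0..t}" for s r a b
  proof -
    have "norm (s *\<^sub>R axis a (1::real) + r *\<^sub>R axis b 1) \<le> s + r"
      using norm_triangle_ineq[of "s *\<^sub>R axis a (1::real)" "r *\<^sub>R axis b 1"] that
      by (simp add: norm_axis_1)
    moreover have "dist x (x + v) = norm v" for v :: "real^'n"
      by (metis add.right_neutral dist_add_cancel dist_0_norm)
    ultimately show ?thesis
      using that by (simp add: add.assoc)
  qed
  then have in_\<Omega>: "x + s *\<^sub>R axis a 1 + r *\<^sub>R axis b 1 \<in> \<Omega>" if "s \<in> {0..t}" "r \<in> {0..t}" for s r a b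
    using assms(2) that by blast
  have entry: "(D2u y *v axis b 1) \<bullet> axis a 1 = D2u y $ a $ b" for y a b
    by (simp add: matrix_vector_mult_basis inner_axis column_def)
  obtain s\<^sub>1 r\<^sub>1 where sr\<^sub>1: "s\<^sub>1 \<in> {0<..<t}" "r\<^sub>1 \<in> {0<..<t}" and
    diff\<^sub>1: "u (x + t *\<^sub>R axis i 1 + t *\<^sub>R axis j 1) - u (x + t *\<^sub>R axis i 1) - u (x + t *\<^sub>R axis j 1) + u x
       = t * t * D2u (x + s\<^sub>1 *\<^sub>R axis i 1 + r\<^sub>1 *\<^sub>R axis j 1) $ i $ j"
    using second_difference_mean_value[where u = u and Du = Du and x = x and h = "axis i 1" and k = "axis j 1"
        and H = "\<lambda>y h. D2u y *v h", OF \<open>0 < t\<close>]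
      du d2u in_\<Omega> by (auto simp: entry)
  obtain s\<^sub>2 r\<^sub>2 where sr\<^sub>2: "s\<^sub>2 \<in> {0<..<t}" "r\<^sub>2 \<in> {0<..<t}" and
    diff\<^sub>2: "u (x + t *\<^sub>R axis j 1 + t *\<^sub>R axis i 1) - u (x + t *\<^sub>R axis j 1) - u (x + t *\<^sub>R axis i 1) + u x
       = t * t * D2u (x + s\<^sub>2 *\<^sub>R axis j 1 + r\<^sub>2 *\<^sub>R axis i 1) $ j $ i"
    using second_difference_mean_value[where u = u and Du = Du and x = x and h = "axis j 1" and k = "axis i 1"
        and H = "\<lambda>y h. D2u y *v h", OF \<open>0 < t\<close>]
      du d2u in_\<Omega> by (auto simp: entry)
  have "t * t * D2u (x + s\<^sub>1 *\<^sub>R axis i 1 + r\<^sub>1 *\<^sub>R axis j 1) $ i $ j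
      = t * t * D2u (x + s\<^sub>2 *\<^sub>R axis j 1 + r\<^sub>2 *\<^sub>R axis i 1) $ j $ i"
  proof -
    have swap: "x + t *\<^sub>R axis j 1 + t *\<^sub>R axis i 1 = x + t *\<^sub>R axis i 1 + t *\<^sub>R axis j 1"
      by (simp add: algebra_simps)
    show ?thesis
      using diff\<^sub>1 diff\<^sub>2[unfolded swap] by linarith
  qed
  with \<open>0 < t\<close> have "D2u (x + s\<^sub>1 *\<^sub>R axis i 1 + r\<^sub>1 *\<^sub>R axis j 1) $ i $ j
      = D2u (x + s\<^sub>2 *\<^sub>R axis j 1 + r\<^sub>2 *\<^sub>R axis i 1) $ j $ i"
    by simp
  with sr\<^sub>1 sr\<^sub>2 in_cball show ?thesis
    by (meson greaterThanLessThan_iff atLeastAtMost_iff less_imp_le)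
qed

lemma hessian_symmetric:
  fixes u :: "real^'n \<Rightarrow> real" and Du :: "real^'n \<Rightarrow> real^'n" and D2u :: "real^'n \<Rightarrow> real^'n^'n"
  assumes "open \<Omega>" and "x \<in> \<Omega>" and "continuous_on \<Omega> D2u"
    and du: "\<forall>y\<in>\<Omega>. (u has_derivative (\<lambda>h. Du y \<bullet> h)) (at y)"
    and d2u: "\<forall>y\<in>\<Omega>. (Du has_derivative (\<lambda>h. D2u y *v h)) (at y)"
  shows "sym_mat (D2u x)"
proof -
  have "D2u x $ i $ j = D2u x $ j $ i" for i j
  proof (rule ccontr)
    assume "D2u x $ i $ j \<noteq> D2u x $ j $ i"
    define e where "e = \<bar>D2u x $ i $ j - D2u x $ j $ i\<bar> / 2"
    have "0 < e"
      using \<open>D2u x $ i $ j \<noteq> D2u x $ j $ i\<close> by (simp add: e_def)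
    have "isCont D2u x"
      using assms(1-3) continuous_on_eq_continuous_at by blast
    then have "isCont (\<lambda>y. D2u y $ a $ b) x" for a b
      by simp
    then have "\<exists>d>0. \<forall>y. dist y x < d \<longrightarrow> \<bar>D2u y $ a $ b - D2u x $ a $ b\<bar> < e" for a b
      using \<open>0 < e\<close> unfolding continuous_at_eps_delta dist_real_def by blast
    then obtain d\<^sub>1 d\<^sub>2 where "0 < d\<^sub>1" "0 < d\<^sub>2"
      and d\<^sub>1: "\<And>y. dist y x < d\<^sub>1 \<Longrightarrow> \<bar>D2u y $ i $ j - D2u x $ i $ j\<bar> < e"
      and d\<^sub>2: "\<And>y. dist y x < d\<^sub>2 \<Longrightarrow> \<bar>D2u y $ j $ i - D2u x $ j $ i\<bar> < e"
      by (metis (no_types))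
    obtain r where "0 < r" "cball x r \<subseteq> \<Omega>"
      using assms(1,2) open_contains_cball by blast
    define t where "t = min (min d\<^sub>1 d\<^sub>2) r / 4"
    have "0 < t" "cball x (2 * t) \<subseteq> \<Omega>"
      using \<open>0 < d\<^sub>1\<close> \<open>0 < d\<^sub>2\<close> \<open>0 < r\<close> \<open>cball x r \<subseteq> \<Omega>\<close> by (auto simp: t_def)
    then obtain y\<^sub>1 y\<^sub>2 where y: "y\<^sub>1 \<in> cball x (2 * t)" "y\<^sub>2 \<in> cball x (2 * t)"
      and eq: "D2u y\<^sub>1 $ i $ j = D2u y\<^sub>2 $ j $ i"
      using hessian_entries_mean_value[of t x \<Omega> u Du D2u i j] du d2u by blast
    have "dist y x < d\<^sub>1" "dist y x < d\<^sub>2" if "y \<in> cball x (2 * t)" for y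
      using that \<open>0 < d\<^sub>1\<close> \<open>0 < d\<^sub>2\<close> \<open>0 < r\<close> by (auto simp: t_def dist_commute)
    then have "\<bar>D2u y\<^sub>1 $ i $ j - D2u x $ i $ j\<bar> < e" "\<bar>D2u y\<^sub>2 $ j $ i - D2u x $ j $ i\<bar> < e"
      using d\<^sub>1 d\<^sub>2 y by blast+
    with eq show False
      unfolding e_def by (simp add: abs_if split: if_splits)
  qed
  then show ?thesis
    by (simp add: sym_mat_def transpose_def vec_eq_iff)
qed

lemma subdiff_inequality_at_zero:
  assumes "subdiff F A S" and "sym_mat A"
  shows "F A - F 0 \<le> S A"
proof -
  have "sym_mat (- A)"
    using \<open>sym_mat A\<close> by (simp add: sym_mat_def transpose_def vec_eq_iff)
  then have "S (- A) \<le> F (A + - A) - F A"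
    using \<open>subdiff F A S\<close> unfolding subdiff_def by blast
  moreover have "S (- A) = - S A"
    using \<open>subdiff F A S\<close> unfolding subdiff_def by (simp add: linear_neg)
  ultimately show ?thesis
    by simp
qed

theorem proposition2p8:
  fixes F :: "real^'n^'n \<Rightarrow> real" and \<Lambda> \<gamma> :: real
    and \<Omega> :: "(real^'n) set"
    and u :: "real^'n \<Rightarrow> real" and Du :: "real^'n \<Rightarrow> real^'n" and D2u :: "real^'n \<Rightarrow> real^'n^'n"
  assumes "\<Lambda> \<ge> 1" and "1 < \<gamma>" and "\<gamma> < 2"
    and "standing_F \<Lambda> F"
    and "open \<Omega>" and "connected \<Omega>"
    and "in_SF F \<gamma> \<Omega> u Du D2u"
  shows "(\<forall>x\<in>\<Omega>. u x > 0 \<longrightarrow> (\<forall>S. subdiff F (D2u x) S \<longrightarrow>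
            S (D2u x) - (\<gamma> - 1) * u x powr (\<gamma> - 2) * u x \<ge> (2 - \<gamma>) * u x powr (\<gamma> - 1)))
       \<and> (\<forall>x\<in>\<Omega>. trace (D2u x) \<le> u x powr (\<gamma> - 1))"
proof -
  have trace: "subdiff F 0 trace" and "F 0 = 0"
    using \<open>standing_F \<Lambda> F\<close> unfolding standing_F_def by auto
  have "continuous_on \<Omega> D2u"
    and du: "\<forall>x\<in>\<Omega>. (u has_derivative (\<lambda>h. Du x \<bullet> h)) (at x)"
    and d2u: "\<forall>x\<in>\<Omega>. (Du has_derivative (\<lambda>h. D2u x *v h)) (at x)"
    and equation: "\<And>x. x \<in> \<Omega> \<Longrightarrow> 0 \<le> u x \<and> F (D2u x) = u x powr (\<gamma> - 1)"
    using \<open>in_SF F \<gamma> \<Omega> u Du D2u\<close> unfolding in_SF_def by auto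
  have sym: "sym_mat (D2u x)" if "x \<in> \<Omega>" for x
    using hessian_symmetric[OF \<open>open \<Omega>\<close> that \<open>continuous_on \<Omega> D2u\<close> du d2u] .
  show ?thesis
  proof (intro conjI ballI impI allI)
    fix x S assume "x \<in> \<Omega>" and "0 < u x" and "subdiff F (D2u x) S"
    then have "u x powr (\<gamma> - 1) \<le> S (D2u x)"
      using subdiff_inequality_at_zero sym equation \<open>F 0 = 0\<close> by fastforce
    moreover have "u x powr (\<gamma> - 2) * u x = u x powr (\<gamma> - 1)"
      using powr_mult_base[of "u x" "\<gamma> - 2"] equation \<open>x \<in> \<Omega>\<close> by (simp add: mult.commute)
    ultimately show "S (D2u x) - (\<gamma> - 1) * u x powr (\<gamma> - 2) * u x \<ge> (2 - \<gamma>) * u x powr (\<gamma> - 1)"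
      by (simp add: algebra_simps)
  next
    fix x assume "x \<in> \<Omega>"
    then have "trace (D2u x) \<le> F (0 + D2u x) - F 0"
      using trace sym unfolding subdiff_def by blast
    then show "trace (D2u x) \<le> u x powr (\<gamma> - 1)"
      using equation \<open>x \<in> \<Omega>\<close> \<open>F 0 = 0\<close> by simp
  qed
qed

end
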